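(* In the Prox-SDCA procedure described in the context, with $\Delta\alpha_i$ chosen by Option I, assume each $\phi_i^*$ is $\gamma$-strongly convex with respect to $\|\cdot\|_D$ (where $\gamma\ge0$ may be zero). For each $t$ and $i$ let $u_i^{(t-1)}$ be any vector with $-u^{(t-1)}_i \in \partial \phi_i(X_i^\top w^{(t-1)})$. Then for any iteration $t$ and any $s \in [0,1]$, \[ \mathbb{E}[D(\alpha^{(t)})-D(\alpha^{(t-1)})] \ge \frac{s}{n}\, \mathbb{E}[P(w^{(t-1)})-D(\alpha^{(t-1)})] - \left(\frac{s}{n}\right)^2 \frac{G^{(t)}}{2\lambda}, \] where \[ G^{(t)} = \frac{1}{n} \sum_{i=1}^n \left(\|X_i\|^2 - \frac{\gamma(1-s)\lambda n}{s}\right) \mathbb{E} \left[\|u^{(t-1)}_i-\alpha^{(t-1)}_i\|_D^2\right]. \]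
   Context: Let $X_1,\dots,X_n\in\mathbb{R}^{d\times k}$, $\phi_1,\dots,\phi_n:\mathbb{R}^k\to\mathbb{R}$ convex, $g:\mathbb{R}^d\to\mathbb{R}$ convex, $\lambda>0$, $P(w)=\frac1n\sum_i\phi_i(X_i^\top w)+\lambda g(w)$, and for $\alpha\in\mathbb{R}^{k\times n}$ with columns $\alpha_i$, $D(\alpha)=\frac1n\sum_i-\phi_i^*(-\alpha_i)-\lambda g^*(\frac{1}{\lambda n}\sum_iX_i\alpha_i)$, where $f^*$ is the convex conjugate. $\|\cdot\|_P$ is a norm on $\mathbb{R}^k$ with dual norm $\|\cdot\|_D$; $g$ is $1$-strongly convex w.r.t. a norm $\|\cdot\|_{P'}$ on $\mathbb{R}^d$ with dual norm $\|\cdot\|_{D'}$, and $g^*$ is continuously differentiable. $\|X\|=\sup_{u\ne0}\|Xu\|_{D'}/\|u\|_D$. A function $f$ is $\gamma$-strongly convex w.r.t. $\|\cdot\|_D$ if $f(su+(1-s)v)\le sf(u)+(1-s)f(v)-\frac{\gamma s(1-s)}2\|u-v\|_D^2$ for $s\in[0,1]$. Procedure Prox-SDCA with Option I: $\alpha^{(0)}=0$, $v^{(0)}=0$, $w^{(0)}=\nabla g^*(0)$; at iteration $t$ pick $i\in\{1,\dots,n\}$ uniformly at random, let $\Delta\alpha_i\in\arg\max_\Delta\big[-\phi_i^*(-(\alpha_i^{(t-1)}+\Delta))-w^{(t-1)\top}X_i\Delta-\frac{1}{2\lambda n}\|X_i\Delta\|_{D'}^2\big]$, set $\alpha_i^{(t)}=\alpha_i^{(t-1)}+\Delta\alpha_i$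 (other columns unchanged), $v^{(t)}=v^{(t-1)}+(\lambda n)^{-1}X_i\Delta\alpha_i$, $w^{(t)}=\nabla g^*(v^{(t)})$. Expectations are over the random choices of the procedure. *)

theory Defs
  imports "HOL-Analysis.Analysis" "HOL-Library.Extended_Real"
begin

definition is_norm :: "('a::real_vector \<Rightarrow> real) \<Rightarrow> bool" where
  "is_norm N \<longleftrightarrow> (\<forall>x. N x \<ge> 0) \<and> (\<forall>x. N x = 0 \<longleftrightarrow> x = 0)
     \<and> (\<forall>c x. N (c *\<^sub>R x) = \<bar>c\<bar> * N x) \<and> (\<forall>x y. N (x + y) \<le> N x + N y)"

definition dual_norm :: "('a::real_inner \<Rightarrow> real) \<Rightarrow> 'a \<Rightarrow> real" where
  "dual_norm N y = Sup {x \<bullet> y | x. N x \<le> 1}"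

definition conj :: "('a::real_inner \<Rightarrow> real) \<Rightarrow> 'a \<Rightarrow> ereal" where
  "conj f y = (SUP x. ereal (x \<bullet> y - f x))"

definition strongly_convex_wrt :: "('a::real_vector \<Rightarrow> real) \<Rightarrow> real \<Rightarrow> ('a \<Rightarrow> ereal) \<Rightarrow> bool" where
  "strongly_convex_wrt N \<gamma> f \<longleftrightarrow> (\<forall>u v s. 0 \<le> s \<and> s \<le> 1 \<longrightarrow>
     f (s *\<^sub>R u + (1 - s) *\<^sub>R v) \<le> ereal s * f u + ereal (1 - s) * f v
        - ereal (\<gamma> * s * (1 - s) / 2 * (N (u - v))\<^sup>2))"

definition subdiff :: "('a::real_inner \<Rightarrow> real) \<Rightarrow> 'a \<Rightarrow> 'a set" where
  "subdiff f x = {z. \<forall>y. f y \<ge> f x + z \<bullet> (y - x)}"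

definition op_norm :: "(real^'k \<Rightarrow> real) \<Rightarrow> (real^'d \<Rightarrow> real) \<Rightarrow> real^'k^'d \<Rightarrow> real" where
  "op_norm ND ND' X = Sup {ND' (X *v u) / ND u | u. u \<noteq> 0}"

definition primal :: "nat \<Rightarrow> real \<Rightarrow> (nat \<Rightarrow> real^'k \<Rightarrow> real) \<Rightarrow> (real^'d \<Rightarrow> real)
     \<Rightarrow> (nat \<Rightarrow> real^'k^'d) \<Rightarrow> real^'d \<Rightarrow> real" where
  "primal n lam \<phi> g X w = (1 / real n) * (\<Sum>i<n. \<phi> i (transpose (X i) *v w)) + lam * g w"

text \<open>Dual objective D(alpha); columns alpha_i are indexed by i < n (0-based).\<close>
definition dual :: "nat \<Rightarrow> real \<Rightarrow> (nat \<Rightarrow> real^'k \<Rightarrow> real) \<Rightarrow> (real^'d \<Rightarrow> real)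
     \<Rightarrow> (nat \<Rightarrow> real^'k^'d) \<Rightarrow> (nat \<Rightarrow> real^'k) \<Rightarrow> ereal" where
  "dual n lam \<phi> g X \<alpha> = ereal (1 / real n) * (\<Sum>i<n. - conj (\<phi> i) (- \<alpha> i))
     - ereal lam * conj g ((1 / (lam * real n)) *\<^sub>R (\<Sum>i<n. X i *v \<alpha> i))"

text \<open>Index histories of length m with entries in {0..<n} (the random choices of
  the first m iterations), and expectation = uniform average over them.\<close>
definition hists :: "nat \<Rightarrow> nat \<Rightarrow> nat list set" where
  "hists n m = {h. set h \<subseteq> {..<n} \<and> length h = m}"

definition expect :: "nat \<Rightarrow> nat \<Rightarrow> (nat list \<Rightarrow> real) \<Rightarrow> real" where
  "expect n m f = (\<Sum>h\<in>hists n m. f h) / real n ^ m"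

definition expect_e :: "nat \<Rightarrow> nat \<Rightarrow> (nat list \<Rightarrow> ereal) \<Rightarrow> ereal" where
  "expect_e n m f = ereal (1 / real n ^ m) * (\<Sum>h\<in>hists n m. f h)"

end

theory Submission
  imports Defs
begin

text \<open>The dual objective separates into the terms -\<phi>_i*(-\<alpha>_i) and the term -\<lambda> g*(v), and g* is
  1-smooth with respect to the dual norm because g is 1-strongly convex. Hence the Option I step in
  coordinate i increases D at least as much as the comparison step \<Delta> = s (u_i - \<alpha>_i). By \<gamma>-strong
  convexity of \<phi>_i* and the Fenchel--Young equality at the subgradient -u_i, that step gains s times
  the coordinate gap \<phi>_i(X_i^T w) + \<phi>_i*(-\<alpha>_i) + \<langle>w, X_i \<alpha>_i\<rangle>, up to a quadratic term. The
  coordinate gaps average to P(w) - D(\<alpha>), so averaging over the random coordinate gives the bound.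
  If some \<phi>_i*(-\<alpha>_i) is infinite then D(\<alpha>) = -\<infinity> and the expected increase is +\<infinity>.\<close>

section \<open>Norms and dual norms\<close>

lemma is_normD:
  assumes "is_norm N"
  shows is_norm_nonneg: "N x \<ge> 0" and is_norm_eq_0: "N x = 0 \<longleftrightarrow> x = 0"
    and is_norm_scaleR: "N (c *\<^sub>R x) = \<bar>c\<bar> * N x" and is_norm_triangle: "N (x + y) \<le> N x + N y"
  using assms unfolding is_norm_def by auto

lemma is_norm_zero: "is_norm N \<Longrightarrow> N 0 = 0"
  using is_norm_eq_0 by blast

lemma is_norm_minus: "is_norm N \<Longrightarrow> N (- x) = N x"
  using is_norm_scaleR[of N "-1" x] by simp

lemma is_norm_pos: "is_norm N \<Longrightarrow> x \<noteq> 0 \<Longrightarrow> N x > 0"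
  using is_norm_nonneg is_norm_eq_0 by (metis less_eq_real_def)

lemma is_norm_sum:
  assumes "is_norm N" "finite A"
  shows "N (\<Sum>a\<in>A. f a) \<le> (\<Sum>a\<in>A. N (f a))"
  using assms(2)
proof (induction A rule: finite_induct)
  case empty
  then show ?case using is_norm_zero[OF assms(1)] by simp
next
  case (insert a A)
  then show ?case using is_norm_triangle[OF assms(1), of "f a" "sum f A"] by simp
qed

lemma is_norm_le_euclidean:
  fixes N :: "'a::euclidean_space \<Rightarrow> real"
  assumes "is_norm N"
  obtains C where "C > 0" "\<And>x. N x \<le> C * norm x"
proof
  let ?C = "(\<Sum>b\<in>Basis. N b) + 1"
  show "?C > 0" using is_norm_nonneg[OF assms] by (simp add: add_nonneg_pos sum_nonneg)
  show "N x \<le> ?C * norm x" for x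
  proof -
    have "N x = N (\<Sum>b\<in>Basis. (x \<bullet> b) *\<^sub>R b)" by (simp add: euclidean_representation)
    also have "\<dots> \<le> (\<Sum>b\<in>Basis. N ((x \<bullet> b) *\<^sub>R b))" by (rule is_norm_sum[OF assms]) simp
    also have "\<dots> = (\<Sum>b\<in>Basis. \<bar>x \<bullet> b\<bar> * N b)" by (simp add: is_norm_scaleR[OF assms])
    also have "\<dots> \<le> (\<Sum>b\<in>Basis. norm x * N b)"
      by (rule sum_mono) (metis Basis_le_norm is_norm_nonneg[OF assms] mult_right_mono)
    also have "\<dots> \<le> ?C * norm x" by (simp add: sum_distrib_left algebra_simps)
    finally show ?thesis .
  qed
qed

lemma continuous_on_is_norm:
  fixes N :: "'a::euclidean_space \<Rightarrow> real"
  assumes "is_norm N"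
  shows "continuous_on UNIV N"
proof -
  obtain C where C: "C > 0" "\<And>x. N x \<le> C * norm x" using is_norm_le_euclidean[OF assms] by blast
  have "dist (N x) (N y) \<le> C * dist x y" for x y
    using is_norm_triangle[OF assms, of y "x - y"] is_norm_triangle[OF assms, of x "y - x"]
      is_norm_minus[OF assms, of "x - y"] C(2)[of "x - y"]
    by (simp add: dist_real_def dist_norm)
  then have "C-lipschitz_on UNIV N" by (intro lipschitz_onI) (use C in auto)
  then show ?thesis by (rule lipschitz_on_continuous_on)
qed

lemma is_norm_ge_euclidean:
  fixes N :: "'a::euclidean_space \<Rightarrow> real"
  assumes "is_norm N"
  obtains c where "c > 0" "\<And>x. c * norm x \<le> N x"
proof -
  have "sphere (0::'a) 1 \<noteq> {}" by simp
  then obtain x0 where x0: "x0 \<in> sphere 0 1" "\<And>y. y \<in> sphere 0 1 \<Longrightarrow> N x0 \<le> N y"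
    using continuous_attains_inf[OF compact_sphere _ continuous_on_subset[OF continuous_on_is_norm[OF assms]]]
    by blast
  have "N x0 * norm x \<le> N x" for x
  proof (cases "x = 0")
    case False
    then have "N x0 \<le> N ((1 / norm x) *\<^sub>R x)" using x0(2) by simp
    then show ?thesis using False by (simp add: is_norm_scaleR[OF assms] field_simps)
  qed (simp add: is_norm_zero[OF assms])
  moreover have "x0 \<noteq> 0" using x0(1) by auto
  then have "N x0 > 0" by (rule is_norm_pos[OF assms])
  ultimately show ?thesis using that by blast
qed

lemma bdd_above_dual_norm:
  fixes N :: "'a::euclidean_space \<Rightarrow> real"
  assumes "is_norm N"
  shows "bdd_above {x \<bullet> y | x. N x \<le> 1}"
proof -
  obtain c where c: "c > 0" "\<And>x. c * norm x \<le> N x" using is_norm_ge_euclidean[OF assms] by blast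
  have "x \<bullet> y \<le> norm y / c" if "N x \<le> 1" for x
  proof -
    have "norm x \<le> 1 / c" using c(2)[of x] that c(1) by (simp add: field_simps)
    then show ?thesis
      using norm_cauchy_schwarz[of x y] mult_right_mono[of "norm x" "1/c" "norm y"] by simp
  qed
  then show ?thesis unfolding bdd_above_def by blast
qed

lemma dual_norm_upper:
  fixes N :: "'a::euclidean_space \<Rightarrow> real"
  assumes "is_norm N" "N x \<le> 1"
  shows "x \<bullet> y \<le> dual_norm N y"
  unfolding dual_norm_def by (rule cSup_upper) (use assms bdd_above_dual_norm[OF assms(1)] in auto)

lemma dual_norm_least:
  fixes N :: "'a::euclidean_space \<Rightarrow> real"
  assumes "is_norm N" "\<And>x. N x \<le> 1 \<Longrightarrow> x \<bullet> y \<le> b"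
  shows "dual_norm N y \<le> b"
  unfolding dual_norm_def
proof (rule cSup_least)
  have "0 \<bullet> y \<in> {x \<bullet> y |x. N x \<le> 1}" using is_norm_zero[OF assms(1)] by fastforce
  then show "{x \<bullet> y |x. N x \<le> 1} \<noteq> {}" by blast
qed (use assms in blast)

lemma inner_le_dual_norm:
  fixes N :: "'a::euclidean_space \<Rightarrow> real"
  assumes "is_norm N"
  shows "x \<bullet> y \<le> N x * dual_norm N y"
proof (cases "x = 0")
  case False
  then have pos: "N x > 0" using is_norm_pos[OF assms] by blast
  have "N ((1 / N x) *\<^sub>R x) \<le> 1" using pos by (simp add: is_norm_scaleR[OF assms])
  from dual_norm_upper[OF assms this, of y] show ?thesis using pos by (simp add: field_simps)
qed (simp add: is_norm_zero[OF assms] dual_norm_upper[OF assms])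

lemma is_norm_dual_norm:
  fixes N :: "'a::euclidean_space \<Rightarrow> real"
  assumes "is_norm N"
  shows "is_norm (dual_norm N)"
proof -
  have nonneg: "dual_norm N y \<ge> 0" for y
    using dual_norm_upper[OF assms, of 0 y] is_norm_zero[OF assms] by simp
  have pos: "dual_norm N y > 0" if "y \<noteq> 0" for y
  proof -
    have Ny: "N y > 0" using is_norm_pos[OF assms that] .
    have "N ((1 / N y) *\<^sub>R y) \<le> 1" using Ny by (simp add: is_norm_scaleR[OF assms])
    from dual_norm_upper[OF assms this, of y] have "y \<bullet> y / N y \<le> dual_norm N y" by simp
    moreover have "y \<bullet> y / N y > 0" using that Ny by simp
    ultimately show ?thesis by linarith
  qed
  have zero: "dual_norm N 0 = 0"
    using dual_norm_least[OF assms, of 0 0] nonneg[of 0] by simp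
  have scale_le: "dual_norm N (c *\<^sub>R y) \<le> \<bar>c\<bar> * dual_norm N y" for c y
  proof (rule dual_norm_least[OF assms])
    fix x assume "N x \<le> 1"
    then have "N (sgn c *\<^sub>R x) \<le> 1" by (simp add: is_norm_scaleR[OF assms] sgn_if)
    from dual_norm_upper[OF assms this, of y]
    have "\<bar>c\<bar> * ((sgn c *\<^sub>R x) \<bullet> y) \<le> \<bar>c\<bar> * dual_norm N y" by (simp add: mult_left_mono)
    then show "x \<bullet> c *\<^sub>R y \<le> \<bar>c\<bar> * dual_norm N y" by (metis abs_mult_sgn inner_scaleR_left inner_scaleR_right mult.assoc)
  qed
  have scale: "dual_norm N (c *\<^sub>R y) = \<bar>c\<bar> * dual_norm N y" for c y
  proof (cases "c = 0")
    case False
    have "dual_norm N y \<le> \<bar>1 / c\<bar> * dual_norm N (c *\<^sub>R y)"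
      using scale_le[of "1 / c" "c *\<^sub>R y"] False by simp
    then have "\<bar>c\<bar> * dual_norm N y \<le> dual_norm N (c *\<^sub>R y)"
      using False by (simp add: field_simps)
    then show ?thesis using scale_le[of c y] by simp
  qed (simp add: zero)
  have triangle: "dual_norm N (y + z) \<le> dual_norm N y + dual_norm N z" for y z
    by (rule dual_norm_least[OF assms])
      (simp add: inner_add_right add_mono dual_norm_upper[OF assms])
  show ?thesis
    unfolding is_norm_def using nonneg pos zero scale triangle by (metis less_irrefl)
qed

lemma op_norm_bound:
  fixes ND :: "real^'k \<Rightarrow> real" and ND' :: "real^'d \<Rightarrow> real" and X :: "real^'k^'d"
  assumes nD: "is_norm ND" and nD': "is_norm ND'"
  shows "ND' (X *v z) \<le> op_norm ND ND' X * ND z"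
proof (cases "z = 0")
  case False
  obtain C where C: "C > 0" "\<And>y. ND' y \<le> C * norm y" using is_norm_le_euclidean[OF nD'] by blast
  obtain c where c: "c > 0" "\<And>y. c * norm y \<le> ND y" using is_norm_ge_euclidean[OF nD] by blast
  obtain B where B: "\<And>u. norm (X *v u) \<le> norm u * B" "B > 0"
    using bounded_linear.pos_bounded[OF matrix_vector_mul_bounded_linear[of X]] by blast
  have "ND' (X *v u) / ND u \<le> C * B / c" if "u \<noteq> 0" for u
  proof -
    have "ND' (X *v u) \<le> C * (norm u * B)"
      using C(2)[of "X *v u"] mult_left_mono[OF B(1)[of u] less_imp_le[OF C(1)]] by linarith
    also have "\<dots> = (C * B / c) * (c * norm u)" using c(1) by simp
    also have "\<dots> \<le> (C * B / c) * ND u"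
      using c B C by (intro mult_left_mono) auto
    finally show ?thesis using is_norm_pos[OF nD that] by (simp add: field_simps)
  qed
  then have bdd: "bdd_above {ND' (X *v u) / ND u | u. u \<noteq> 0}" unfolding bdd_above_def by blast
  have "ND' (X *v z) / ND z \<le> op_norm ND ND' X"
    unfolding op_norm_def by (rule cSup_upper[OF _ bdd]) (use False in blast)
  then show ?thesis using is_norm_pos[OF nD False] by (simp add: field_simps)
qed (simp add: is_norm_zero[OF nD'] is_norm_zero[OF nD])

section \<open>Convex conjugates\<close>

lemma fenchel_young: "ereal (x \<bullet> y - f x) \<le> conj f y"
  unfolding conj_def by (rule SUP_upper) simp

lemma conj_neq_MInfty: "conj f y \<noteq> -\<infinity>"
  using fenchel_young[of 0 y f] by auto

lemma conj_at_subgradient: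
  assumes "z \<in> subdiff f a"
  shows "conj f z = ereal (a \<bullet> z - f a)"
proof (rule antisym)
  show "conj f z \<le> ereal (a \<bullet> z - f a)"
    unfolding conj_def
  proof (rule SUP_least)
    fix x
    have "f x \<ge> f a + z \<bullet> (x - a)" using assms unfolding subdiff_def by blast
    then show "ereal (x \<bullet> z - f x) \<le> ereal (a \<bullet> z - f a)"
      by (simp add: inner_diff_right inner_commute)
  qed
qed (rule fenchel_young)

lemma strongly_convex_wrt_realD:
  assumes "strongly_convex_wrt N \<gamma> (\<lambda>x. ereal (f x))" "0 \<le> s" "s \<le> 1"
  shows "f (s *\<^sub>R x + (1 - s) *\<^sub>R y) \<le> s * f x + (1 - s) * f y - \<gamma> * s * (1 - s) / 2 * (N (x - y))\<^sup>2"
proof -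
  have "ereal (f (s *\<^sub>R x + (1 - s) *\<^sub>R y)) \<le> ereal s * ereal (f x) + ereal (1 - s) * ereal (f y)
      - ereal (\<gamma> * s * (1 - s) / 2 * (N (x - y))\<^sup>2)"
    using assms unfolding strongly_convex_wrt_def by blast
  then show ?thesis by simp
qed

lemma strongly_convex_wrt_diff_inner:
  assumes "strongly_convex_wrt N \<gamma> (\<lambda>x. ereal (f x))"
  shows "strongly_convex_wrt N \<gamma> (\<lambda>x. ereal (f x - x \<bullet> v))"
  unfolding strongly_convex_wrt_def
proof (intro allI impI)
  fix x y and s :: real assume "0 \<le> s \<and> s \<le> 1"
  then have "f (s *\<^sub>R x + (1 - s) *\<^sub>R y) \<le> s * f x + (1 - s) * f y - \<gamma> * s * (1 - s) / 2 * (N (x - y))\<^sup>2"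
    using strongly_convex_wrt_realD[OF assms] by blast
  moreover have "(s *\<^sub>R x + (1 - s) *\<^sub>R y) \<bullet> v = s * (x \<bullet> v) + (1 - s) * (y \<bullet> v)"
    by (simp add: inner_add_left)
  ultimately have "f (s *\<^sub>R x + (1 - s) *\<^sub>R y) - (s *\<^sub>R x + (1 - s) *\<^sub>R y) \<bullet> v
      \<le> s * (f x - x \<bullet> v) + (1 - s) * (f y - y \<bullet> v) - \<gamma> * s * (1 - s) / 2 * (N (x - y))\<^sup>2"
    by (simp only: right_diff_distrib)
  then show "ereal (f (s *\<^sub>R x + (1 - s) *\<^sub>R y) - (s *\<^sub>R x + (1 - s) *\<^sub>R y) \<bullet> v)
      \<le> ereal s * ereal (f x - x \<bullet> v) + ereal (1 - s) * ereal (f y - y \<bullet> v)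
         - ereal (\<gamma> * s * (1 - s) / 2 * (N (x - y))\<^sup>2)"
    by simp
qed

lemma strongly_convex_quadratic_growth:
  assumes strong: "strongly_convex_wrt N \<gamma> (\<lambda>x. ereal (f x))" and min: "\<And>y. f x0 \<le> f y"
  shows "f x0 + \<gamma> / 2 * (N (x - x0))\<^sup>2 \<le> f x"
proof -
  define Q where "Q = \<gamma> / 2 * (N (x - x0))\<^sup>2"
  have "z * Q \<le> f x - f x0" if "0 < z" "z < 1" for z
  proof -
    have "f x0 \<le> f ((1 - z) *\<^sub>R x + (1 - (1 - z)) *\<^sub>R x0)" by (rule min)
    also have "\<dots> \<le> (1 - z) * f x + z * f x0 - (1 - z) * (z * Q)"
      using strongly_convex_wrt_realD[OF strong, of "1 - z" x x0] that unfolding Q_def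
      by (simp add: mult_ac)
    finally have "(1 - z) * (z * Q) \<le> (1 - z) * (f x - f x0)"
      by (simp add: left_diff_distrib right_diff_distrib)
    then show ?thesis using that by simp
  qed
  then have "Q \<le> f x - f x0" by (rule field_le_mult_one_interval)
  then show ?thesis unfolding Q_def by simp
qed

lemma strongly_convex_coercive:
  assumes strong: "strongly_convex_wrt N \<gamma> (\<lambda>x. ereal (f x))" and lower: "\<And>x. m \<le> f x"
  shows "\<gamma> * (N x)\<^sup>2 \<le> 4 * (f x + f 0 - 2 * m)"
proof -
  have "m \<le> f ((1/2) *\<^sub>R x + (1 - 1/2) *\<^sub>R 0)" by (rule lower)
  also have "\<dots> \<le> f x / 2 + f 0 / 2 - \<gamma> / 8 * (N x)\<^sup>2"
    using strongly_convex_wrt_realD[OF strong, of "1/2" x 0] by simp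
  finally show ?thesis by simp
qed

lemma strongly_convex_attains_min:
  fixes f :: "'a::euclidean_space \<Rightarrow> real"
  assumes N: "is_norm N" and \<gamma>: "\<gamma> > 0" and cont: "continuous_on UNIV f"
    and strong: "strongly_convex_wrt N \<gamma> (\<lambda>x. ereal (f x))" and lower: "\<And>x. m \<le> f x"
  obtains x0 where "\<And>x. f x0 \<le> f x"
proof -
  obtain c where c: "c > 0" "\<And>x. c * norm x \<le> N x" using is_norm_ge_euclidean[OF N] by blast
  define K where "K = {x. f x \<le> f 0}"
  have coercive: "(\<gamma> * c\<^sup>2) * (norm x)\<^sup>2 \<le> 8 * (f 0 - m)" if "x \<in> K" for x
  proof -
    have "\<gamma> * (c * norm x)\<^sup>2 \<le> \<gamma> * (N x)\<^sup>2"
      using c \<gamma> by (intro mult_left_mono power_mono) auto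
    then show ?thesis
      using strongly_convex_coercive[OF strong lower, of x] that unfolding K_def
      by (simp add: power_mult_distrib mult.assoc)
  qed
  have "\<gamma> * c\<^sup>2 > 0" using \<gamma> c(1) by simp
  then have bound: "norm x \<le> 1 + 8 * (f 0 - m) / (\<gamma> * c\<^sup>2)" if "x \<in> K" for x
  proof -
    have "(norm x)\<^sup>2 \<le> 8 * (f 0 - m) / (\<gamma> * c\<^sup>2)"
      unfolding pos_le_divide_eq[OF \<open>\<gamma> * c\<^sup>2 > 0\<close>] by (subst mult.commute) (rule coercive[OF that])
    moreover have "2 * norm x \<le> 1 + (norm x)\<^sup>2" using sum_squares_bound[of 1 "norm x"] by simp
    ultimately show ?thesis using norm_ge_zero[of x] by linarith
  qed
  have "bounded K"
    unfolding bounded_iff by (intro exI ballI) (rule bound)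
  moreover have "closed K"
    unfolding K_def using closed_Collect_le[OF cont continuous_on_const] .
  ultimately have "compact K" by (simp add: compact_eq_bounded_closed)
  moreover have "K \<noteq> {}" unfolding K_def by auto
  ultimately have "\<exists>x0\<in>K. \<forall>x\<in>K. f x0 \<le> f x"
    using continuous_attains_inf continuous_on_subset[OF cont] by blast
  then obtain x0 where x0: "x0 \<in> K" "\<And>x. x \<in> K \<Longrightarrow> f x0 \<le> f x" by blast
  have "f x0 \<le> f x" for x
  proof (cases "x \<in> K")
    case False
    then show ?thesis using x0(2)[of 0] unfolding K_def by simp
  qed (rule x0(2))
  then show ?thesis by (rule that)
qed

context
  fixes g :: "'a::euclidean_space \<Rightarrow> real" and N :: "'a \<Rightarrow> real"
  assumes N: "is_norm N" and g_convex: "convex_on UNIV g"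
    and g_strong: "strongly_convex_wrt N 1 (\<lambda>x. ereal (g x))"
    and conj_finite: "\<And>y. conj g y \<noteq> \<infinity>"
begin

lemma conj_eq_real: "conj g y = ereal (real_of_ereal (conj g y))"
  using conj_finite[of y] conj_neq_MInfty[of g y] by (cases "conj g y") auto

text \<open>Strong convexity gives a minimiser x0 of g - \<langle>\<cdot>, v\<rangle>; then x0 is a subgradient of g* at v,
  and a subgradient of a differentiable function is its gradient.\<close>
lemma conj_at_gradient:
  assumes deriv: "((\<lambda>y. real_of_ereal (conj g y)) has_derivative (\<lambda>h. w \<bullet> h)) (at v)"
  shows "conj g v = ereal (w \<bullet> v - g w)"
proof -
  define G where "G y = real_of_ereal (conj g y)" for y
  have conj_G: "conj g y = ereal (G y)" for y
    using conj_eq_real unfolding G_def .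
  have fy: "x \<bullet> y - g x \<le> G y" for x y
    using fenchel_young[of x y g] unfolding conj_G by simp
  have cont: "continuous_on UNIV (\<lambda>x. g x - x \<bullet> v)"
    using convex_on_continuous[OF open_UNIV g_convex] by (intro continuous_intros) auto
  have "- G v \<le> g x - x \<bullet> v" for x using fy[of x v] by simp
  then obtain x0 where x0: "\<And>x. g x0 - x0 \<bullet> v \<le> g x - x \<bullet> v"
    using strongly_convex_attains_min[OF N zero_less_one cont strongly_convex_wrt_diff_inner[OF g_strong]]
    by blast
  have "conj g v \<le> ereal (x0 \<bullet> v - g x0)"
    unfolding conj_def using x0 by (intro SUP_least) (simp add: algebra_simps)
  then have Gv: "G v = x0 \<bullet> v - g x0"
    using fy[of x0 v] unfolding conj_G by simp
  have "((\<lambda>y. G y - x0 \<bullet> y) has_derivative (\<lambda>h. w \<bullet> h - x0 \<bullet> h)) (at v)"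
    using deriv unfolding G_def by (intro derivative_intros)
  moreover have "G v - x0 \<bullet> v \<le> G y - x0 \<bullet> y" for y
    using fy[of x0 y] Gv by simp
  then have "\<forall>\<^sub>F y in at v. G v - x0 \<bullet> v \<le> G y - x0 \<bullet> y"
    by (intro always_eventually allI)
  ultimately have "(\<lambda>h. w \<bullet> h - x0 \<bullet> h) = (\<lambda>h. 0)" by (rule has_derivative_local_min)
  then have "(w - x0) \<bullet> (w - x0) = 0" by (metis inner_diff_left)
  then have "w = x0" by simp
  then show ?thesis using Gv unfolding conj_G by simp
qed

lemma conj_le_quadratic_upper:
  assumes deriv: "((\<lambda>y. real_of_ereal (conj g y)) has_derivative (\<lambda>h. w \<bullet> h)) (at v)"
  shows "conj g (v + \<delta>) \<le> ereal (w \<bullet> v - g w + w \<bullet> \<delta> + (dual_norm N \<delta>)\<^sup>2 / 2)"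
  unfolding conj_def
proof (rule SUP_least)
  fix x
  have "g w - w \<bullet> v \<le> g y - y \<bullet> v" for y
    using fenchel_young[of y v g] conj_at_gradient[OF deriv] by simp
  then have "g w - w \<bullet> v + 1 / 2 * (N (x - w))\<^sup>2 \<le> g x - x \<bullet> v"
    by (rule strongly_convex_quadratic_growth[OF strongly_convex_wrt_diff_inner[OF g_strong]])
  moreover have "(x - w) \<bullet> \<delta> \<le> (N (x - w))\<^sup>2 / 2 + (dual_norm N \<delta>)\<^sup>2 / 2"
    using inner_le_dual_norm[OF N, of "x - w" \<delta>] sum_squares_bound[of "N (x - w)" "dual_norm N \<delta>"]
    by (simp add: power2_eq_square)
  ultimately show "ereal (x \<bullet> (v + \<delta>) - g x) \<le> ereal (w \<bullet> v - g w + w \<bullet> \<delta> + (dual_norm N \<delta>)\<^sup>2 / 2)"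
    by (simp add: inner_add_right inner_diff_left)
qed

end

section \<open>A single coordinate step\<close>

lemma inner_transpose_mult: "(transpose A *v (w::real^'d)) \<bullet> (u::real^'k) = w \<bullet> (A *v u)"
  by (simp add: inner_vec_def matrix_vector_mult_def vector_matrix_mult_def transpose_def
      sum_distrib_left sum_distrib_right mult.assoc mult.left_commute) (rule sum.swap)

lemma conj_toward_subgradient:
  fixes \<phi> :: "'a::real_inner \<Rightarrow> real"
  assumes N: "is_norm N" and strong: "strongly_convex_wrt N \<gamma> (conj \<phi>)" and s: "0 \<le> s" "s \<le> 1"
    and a: "conj \<phi> (- a) = ereal r" and sub: "- u \<in> subdiff \<phi> x"
  shows "conj \<phi> (- (a + s *\<^sub>R (u - a))) \<le> ereal (r - s * (r + \<phi> x + x \<bullet> u) - \<gamma> * s * (1 - s) / 2 * (N (u - a))\<^sup>2)"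
proof -
  have "conj \<phi> (s *\<^sub>R (- u) + (1 - s) *\<^sub>R (- a)) \<le>
      ereal s * conj \<phi> (- u) + ereal (1 - s) * conj \<phi> (- a) - ereal (\<gamma> * s * (1 - s) / 2 * (N (- u - - a))\<^sup>2)"
    using strong s unfolding strongly_convex_wrt_def by blast
  moreover have "s *\<^sub>R (- u) + (1 - s) *\<^sub>R (- a) = - (a + s *\<^sub>R (u - a))"
    by (simp add: algebra_simps)
  moreover have "N (- u - - a) = N (u - a)"
    using is_norm_minus[OF N, of "u - a"] by simp
  moreover have "conj \<phi> (- u) = ereal (- (x \<bullet> u) - \<phi> x)"
    using conj_at_subgradient[OF sub] by simp
  ultimately show ?thesis
    unfolding a by (simp add: algebra_simps)
qed

lemma conj_coordinate_ascent:
  fixes \<phi> :: "real^'k \<Rightarrow> real" and X :: "real^'k^'d"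
    and ND :: "real^'k \<Rightarrow> real" and ND' :: "real^'d \<Rightarrow> real"
  assumes nD: "is_norm ND" and nD': "is_norm ND'" and c: "c > 0" and s: "0 \<le> s" "s \<le> 1"
    and strong: "strongly_convex_wrt ND \<gamma> (conj \<phi>)"
    and a: "conj \<phi> (- a) = ereal r"
    and sub: "- u \<in> subdiff \<phi> (transpose X *v w)"
    and argmax: "\<And>\<Delta>. - conj \<phi> (- (a + \<Delta>)) - ereal (w \<bullet> (X *v \<Delta>)) - ereal (1 / (2 * c) * (ND' (X *v \<Delta>))\<^sup>2)
        \<le> - conj \<phi> (- (a + \<delta>)) - ereal (w \<bullet> (X *v \<delta>)) - ereal (1 / (2 * c) * (ND' (X *v \<delta>))\<^sup>2)"
  shows "conj \<phi> (- (a + \<delta>)) \<le> ereal (r - w \<bullet> (X *v \<delta>) - (ND' (X *v \<delta>))\<^sup>2 / (2 * c)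
           - s * (r + \<phi> (transpose X *v w) + w \<bullet> (X *v a))
           - (\<gamma> * s * (1 - s) / 2 - s\<^sup>2 * (op_norm ND ND' X)\<^sup>2 / (2 * c)) * (ND (u - a))\<^sup>2)"
proof -
  define x where "x = transpose X *v w"
  define Q where "Q = (ND (u - a))\<^sup>2"
  define K where "K = r - s * (r + \<phi> x + w \<bullet> (X *v u)) - \<gamma> * s * (1 - s) / 2 * Q"
  \<comment> \<open>the comparison step moves the fraction s of the way towards the subgradient -u\<close>
  define \<Delta> where "\<Delta> = s *\<^sub>R (u - a)"
  have "conj \<phi> (- (a + \<Delta>)) \<le> ereal K"
    using conj_toward_subgradient[OF nD strong s a sub] inner_transpose_mult[of X w u]
    unfolding K_def Q_def \<Delta>_def x_def by simp
  then obtain k where k: "conj \<phi> (- (a + \<Delta>)) = ereal k" "k \<le> K"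
    using conj_neq_MInfty[of \<phi> "- (a + \<Delta>)"] by (cases "conj \<phi> (- (a + \<Delta>))") auto
  obtain b where b: "conj \<phi> (- (a + \<delta>)) = ereal b"
    and opt: "- k - w \<bullet> (X *v \<Delta>) - (ND' (X *v \<Delta>))\<^sup>2 / (2 * c)
             \<le> - b - w \<bullet> (X *v \<delta>) - (ND' (X *v \<delta>))\<^sup>2 / (2 * c)"
    using argmax[of \<Delta>] conj_neq_MInfty[of \<phi> "- (a + \<delta>)"] unfolding k(1)
    by (cases "conj \<phi> (- (a + \<delta>))") auto
  have "(ND' (X *v \<Delta>))\<^sup>2 \<le> s\<^sup>2 * (op_norm ND ND' X)\<^sup>2 * Q"
  proof -
    have "ND' (X *v \<Delta>) = s * ND' (X *v (u - a))"
      unfolding \<Delta>_def using s by (simp add: matrix_vector_mult_scaleR is_norm_scaleR[OF nD'])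
    also have "\<dots> \<le> s * (op_norm ND ND' X * ND (u - a))"
      by (rule mult_left_mono[OF op_norm_bound[OF nD nD'] s(1)])
    finally have "(ND' (X *v \<Delta>))\<^sup>2 \<le> (s * (op_norm ND ND' X * ND (u - a)))\<^sup>2"
      using is_norm_nonneg[OF nD'] by (intro power_mono)
    then show ?thesis unfolding Q_def by (simp add: power_mult_distrib mult.assoc)
  qed
  then have "(ND' (X *v \<Delta>))\<^sup>2 / (2 * c) \<le> s\<^sup>2 * (op_norm ND ND' X)\<^sup>2 / (2 * c) * Q"
    using c by (simp add: divide_right_mono)
  moreover have "w \<bullet> (X *v \<Delta>) = s * (w \<bullet> (X *v u)) - s * (w \<bullet> (X *v a))"
    unfolding \<Delta>_def by (simp add: matrix_vector_mult_scaleR matrix_vector_mult_diff_distrib inner_diff_right right_diff_distrib)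
  moreover have "K + (s * (w \<bullet> (X *v u)) - s * (w \<bullet> (X *v a))) + s\<^sup>2 * (op_norm ND ND' X)\<^sup>2 / (2 * c) * Q
      = r - s * (r + \<phi> x + w \<bullet> (X *v a)) - (\<gamma> * s * (1 - s) / 2 - s\<^sup>2 * (op_norm ND ND' X)\<^sup>2 / (2 * c)) * Q"
    unfolding K_def by (simp add: algebra_simps)
  ultimately show ?thesis
    using opt k(2) unfolding b x_def Q_def by simp
qed

section \<open>Expectation over index histories\<close>

lemma finite_hists: "finite (hists n m)"
  unfolding hists_def using finite_lists_length_eq[of "{..<n}" m] by simp

lemma hists_Suc: "hists n (Suc m) = (\<lambda>(h, i). h @ [i]) ` (hists n m \<times> {..<n})"
proof
  show "hists n (Suc m) \<subseteq> (\<lambda>(h, i). h @ [i]) ` (hists n m \<times> {..<n})"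
  proof
    fix h assume h: "h \<in> hists n (Suc m)"
    then have "h \<noteq> []" unfolding hists_def by auto
    then have "h = butlast h @ [last h]" by simp
    moreover have "butlast h \<in> hists n m" "last h < n"
      using h \<open>h \<noteq> []\<close> unfolding hists_def
      by (auto dest: in_set_butlastD) (metis last_in_set lessThan_iff subsetD)
    ultimately show "h \<in> (\<lambda>(h, i). h @ [i]) ` (hists n m \<times> {..<n})" by force
  qed
qed (auto simp: hists_def)

lemma sum_hists_Suc:
  "(\<Sum>h\<in>hists n (Suc m). f h) = (\<Sum>h\<in>hists n m. \<Sum>i<n. f (h @ [i]))"
proof -
  have "inj_on (\<lambda>(h, i). h @ [i]) (hists n m \<times> {..<n})" by (auto simp: inj_on_def)
  then show ?thesis
    unfolding hists_Suc by (simp add: sum.reindex sum.cartesian_product case_prod_unfold finite_hists)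
qed

lemma expect_Suc:
  assumes "n > 0"
  shows "expect n (Suc m) f = expect n m (\<lambda>h. (\<Sum>i<n. f (h @ [i])) / real n)"
  unfolding expect_def sum_hists_Suc using assms by (simp add: sum_divide_distrib field_simps)

lemma expect_mono:
  "(\<And>h. h \<in> hists n m \<Longrightarrow> f h \<le> f' h) \<Longrightarrow> expect n m f \<le> expect n m f'"
  unfolding expect_def by (intro divide_right_mono sum_mono) auto

lemma expect_e_ereal:
  "(\<And>h. h \<in> hists n m \<Longrightarrow> f h = ereal (F h)) \<Longrightarrow> expect_e n m f = ereal (expect n m F)"
  unfolding expect_e_def expect_def by (simp cong: sum.cong)

lemma expect_e_PInfty:
  assumes "n > 0" "h \<in> hists n m" "f h = \<infinity>"
  shows "expect_e n m f = \<infinity>"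
proof -
  have "(\<Sum>h\<in>hists n m. f h) = \<infinity>" using assms(2,3) finite_hists sum_Pinfty by blast
  then show ?thesis unfolding expect_e_def using assms(1) by simp
qed

lemma expect_linear:
  "expect n m (\<lambda>h. a * F h - b * (\<Sum>i\<in>I. c i * q h i))
    = a * expect n m F - b * (\<Sum>i\<in>I. c i * expect n m (\<lambda>h. q h i))"
proof -
  have "(\<Sum>h\<in>hists n m. \<Sum>i\<in>I. c i * q h i) = (\<Sum>i\<in>I. c i * (\<Sum>h\<in>hists n m. q h i))"
    by (subst sum.swap) (simp add: sum_distrib_left)
  then show ?thesis
    unfolding expect_def
    by (simp add: sum_subtractf sum_distrib_left[symmetric] sum_divide_distrib[symmetric] diff_divide_distrib)
qed

section \<open>The Prox-SDCA iteration\<close>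

locale prox_sdca =
  fixes n :: nat and lam \<gamma> :: real
    and X :: "nat \<Rightarrow> real^'k^'d"
    and \<phi> :: "nat \<Rightarrow> real^'k \<Rightarrow> real" and g :: "real^'d \<Rightarrow> real"
    and NP :: "real^'k \<Rightarrow> real" and NP' :: "real^'d \<Rightarrow> real"
    and grad_gs :: "real^'d \<Rightarrow> real^'d"
    and \<alpha> :: "nat list \<Rightarrow> nat \<Rightarrow> real^'k"
    and v :: "nat list \<Rightarrow> real^'d"
    and u :: "nat list \<Rightarrow> nat \<Rightarrow> real^'k"
  assumes n_pos: "n \<ge> 1" and lam_pos: "lam > 0"
    and normP: "is_norm NP" and normP': "is_norm NP'"
    and g_convex: "convex_on UNIV g"
    and g_strong: "strongly_convex_wrt NP' 1 (\<lambda>x. ereal (g x))"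
    and gs_finite: "\<And>y. conj g y \<noteq> \<infinity>"
    and gs_deriv: "\<And>y. ((\<lambda>z. real_of_ereal (conj g z)) has_derivative (\<lambda>h. grad_gs y \<bullet> h)) (at y)"
    and phis_strong: "\<And>i. i < n \<Longrightarrow> strongly_convex_wrt (dual_norm NP) \<gamma> (conj (\<phi> i))"
    and alpha0: "\<And>j. \<alpha> [] j = 0"
    and v0: "v [] = 0"
    and alpha_other: "\<And>h i j. set h \<subseteq> {..<n} \<Longrightarrow> i < n \<Longrightarrow> j \<noteq> i \<Longrightarrow>
                        \<alpha> (h @ [i]) j = \<alpha> h j"
    and alpha_argmax: "\<And>h i \<Delta>. set h \<subseteq> {..<n} \<Longrightarrow> i < n \<Longrightarrow>
        - conj (\<phi> i) (- (\<alpha> h i + \<Delta>)) - ereal (grad_gs (v h) \<bullet> (X i *v \<Delta>))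
            - ereal (1 / (2 * lam * real n) * (dual_norm NP' (X i *v \<Delta>))\<^sup>2)
        \<le> - conj (\<phi> i) (- (\<alpha> h i + (\<alpha> (h @ [i]) i - \<alpha> h i)))
            - ereal (grad_gs (v h) \<bullet> (X i *v (\<alpha> (h @ [i]) i - \<alpha> h i)))
            - ereal (1 / (2 * lam * real n) * (dual_norm NP' (X i *v (\<alpha> (h @ [i]) i - \<alpha> h i)))\<^sup>2)"
    and v_step: "\<And>h i. set h \<subseteq> {..<n} \<Longrightarrow> i < n \<Longrightarrow>
        v (h @ [i]) = v h + (1 / (lam * real n)) *\<^sub>R (X i *v (\<alpha> (h @ [i]) i - \<alpha> h i))"
    and u_sub: "\<And>h i. set h \<subseteq> {..<n} \<Longrightarrow> i < n \<Longrightarrow>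
        - u h i \<in> subdiff (\<phi> i) (transpose (X i) *v grad_gs (v h))"
begin

abbreviation "ND \<equiv> dual_norm NP"
abbreviation "ND' \<equiv> dual_norm NP'"
abbreviation "w h \<equiv> grad_gs (v h)"

definition conj_loss :: "nat list \<Rightarrow> nat \<Rightarrow> real" where
  "conj_loss h j = real_of_ereal (conj (\<phi> j) (- \<alpha> h j))"

definition dual_finite :: "nat list \<Rightarrow> bool" where
  "dual_finite h \<longleftrightarrow> (\<forall>j<n. conj (\<phi> j) (- \<alpha> h j) \<noteq> \<infinity>)"

text \<open>The value of the dual objective when it is finite; g*(v) is written as \<langle>w, v\<rangle> - g(w).\<close>
definition dual_value :: "nat list \<Rightarrow> real" where
  "dual_value h = (1 / real n) * (\<Sum>j<n. - conj_loss h j) - lam * (w h \<bullet> v h - g (w h))"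

text \<open>The Fenchel--Young gap of the i-th loss at the pair (X_i^T w, -\<alpha>_i).\<close>
definition coord_gap :: "nat list \<Rightarrow> nat \<Rightarrow> real" where
  "coord_gap h i = conj_loss h i + \<phi> i (transpose (X i) *v w h) + w h \<bullet> (X i *v \<alpha> h i)"

text \<open>The weight of the i-th term of G^(t); at s = 0 the division gives 0, which is harmless because
  the weight is always multiplied by s^2.\<close>
definition step_coef :: "real \<Rightarrow> nat \<Rightarrow> real" where
  "step_coef s i = (op_norm ND ND' (X i))\<^sup>2 - \<gamma> * (1 - s) * lam * real n / s"

lemma n_gt_0: "real n > 0"
  using n_pos by simp

lemma conj_loss_eq: "dual_finite h \<Longrightarrow> j < n \<Longrightarrow> conj (\<phi> j) (- \<alpha> h j) = ereal (conj_loss h j)"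
  using conj_neq_MInfty[of "\<phi> j" "- \<alpha> h j"] unfolding dual_finite_def conj_loss_def
  by (cases "conj (\<phi> j) (- \<alpha> h j)") auto

lemma v_eq_scaled_sum:
  "set h \<subseteq> {..<n} \<Longrightarrow> v h = (1 / (lam * real n)) *\<^sub>R (\<Sum>j<n. X j *v \<alpha> h j)"
proof (induction h rule: rev_induct)
  case Nil
  then show ?case using v0 alpha0 by simp
next
  case (snoc i h)
  then have h: "set h \<subseteq> {..<n}" and i: "i < n" by auto
  have "(\<Sum>j<n. X j *v \<alpha> (h @ [i]) j)
      = (\<Sum>j<n. X j *v \<alpha> h j + (if j = i then X i *v (\<alpha> (h @ [i]) i - \<alpha> h i) else 0))"
    by (rule sum.cong) (auto simp: alpha_other[OF h i] matrix_vector_mult_diff_distrib)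
  also have "\<dots> = (\<Sum>j<n. X j *v \<alpha> h j) + X i *v (\<alpha> (h @ [i]) i - \<alpha> h i)"
    using i by (simp add: sum.distrib)
  finally show ?case using v_step[OF h i] snoc.IH[OF h] by (simp add: scaleR_add_right)
qed

lemma conj_g_at_v: "conj g (v h) = ereal (w h \<bullet> v h - g (w h))"
  by (rule conj_at_gradient[OF normP' g_convex g_strong gs_finite gs_deriv])

lemma dual_eq_ereal:
  assumes "set h \<subseteq> {..<n}" "dual_finite h"
  shows "dual n lam \<phi> g X (\<alpha> h) = ereal (dual_value h)"
proof -
  have "(\<Sum>j<n. - conj (\<phi> j) (- \<alpha> h j)) = (\<Sum>j<n. ereal (- conj_loss h j))"
    by (rule sum.cong) (simp_all add: conj_loss_eq[OF assms(2)])
  moreover have "(1 / (lam * real n)) *\<^sub>R (\<Sum>j<n. X j *v \<alpha> h j) = v h"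
    using v_eq_scaled_sum[OF assms(1)] by simp
  ultimately show ?thesis
    unfolding dual_def dual_value_def by (simp add: conj_g_at_v)
qed

lemma dual_eq_MInfty:
  assumes "\<not> dual_finite h"
  shows "dual n lam \<phi> g X (\<alpha> h) = -\<infinity>"
proof -
  obtain j where j: "j < n" "conj (\<phi> j) (- \<alpha> h j) = \<infinity>" using assms unfolding dual_finite_def by auto
  let ?S = "\<Sum>j<n. - conj (\<phi> j) (- \<alpha> h j)"
  have "?S \<noteq> \<infinity>"
    unfolding sum_Pinfty using conj_neq_MInfty by (auto simp: ereal_uminus_eq_reorder)
  moreover have "\<bar>?S\<bar> = \<infinity>" unfolding sum_Inf using j by force
  ultimately have "?S = -\<infinity>" by auto
  then show ?thesis
    unfolding dual_def using n_gt_0 gs_finite conj_neq_MInfty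
    by (cases "conj g ((1 / (lam * real n)) *\<^sub>R (\<Sum>i<n. X i *v \<alpha> h i))") auto
qed

lemma sum_coord_gap:
  assumes "set h \<subseteq> {..<n}"
  shows "(\<Sum>i<n. coord_gap h i) = real n * (primal n lam \<phi> g X (w h) - dual_value h)"
proof -
  have "lam * (w h \<bullet> v h) = (\<Sum>i<n. w h \<bullet> (X i *v \<alpha> h i)) / real n"
    using v_eq_scaled_sum[OF assms] lam_pos by (simp add: inner_sum_right)
  moreover have "(\<Sum>i<n. coord_gap h i) = (\<Sum>i<n. conj_loss h i) + (\<Sum>i<n. \<phi> i (transpose (X i) *v w h))
      + (\<Sum>i<n. w h \<bullet> (X i *v \<alpha> h i))"
    unfolding coord_gap_def by (simp add: sum.distrib)
  ultimately show ?thesis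
    unfolding primal_def dual_value_def using n_gt_0 by (simp add: sum_negf field_simps)
qed

lemma conj_g_snoc:
  assumes h: "set h \<subseteq> {..<n}" and i: "i < n"
  defines "\<delta> \<equiv> \<alpha> (h @ [i]) i - \<alpha> h i"
  shows "lam * ((w (h @ [i]) \<bullet> v (h @ [i]) - g (w (h @ [i]))) - (w h \<bullet> v h - g (w h)))
    \<le> (w h \<bullet> (X i *v \<delta>) + (ND' (X i *v \<delta>))\<^sup>2 / (2 * (lam * real n))) / real n"
proof -
  define d where "d = (1 / (lam * real n)) *\<^sub>R (X i *v \<delta>)"
  have "conj g (v (h @ [i])) \<le> ereal (w h \<bullet> v h - g (w h) + w h \<bullet> d + (ND' d)\<^sup>2 / 2)"
    using conj_le_quadratic_upper[OF normP' g_convex g_strong gs_finite gs_deriv, of "v h" d]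
    unfolding v_step[OF h i] d_def \<delta>_def .
  then have "w (h @ [i]) \<bullet> v (h @ [i]) - g (w (h @ [i])) \<le> w h \<bullet> v h - g (w h) + w h \<bullet> d + (ND' d)\<^sup>2 / 2"
    unfolding conj_g_at_v by simp
  moreover have "ND' d = ND' (X i *v \<delta>) / (lam * real n)"
    unfolding d_def using is_norm_scaleR[OF is_norm_dual_norm[OF normP']] lam_pos n_gt_0 by simp
  moreover have "w h \<bullet> d = w h \<bullet> (X i *v \<delta>) / (lam * real n)"
    unfolding d_def by simp
  ultimately show ?thesis
    using lam_pos n_gt_0 by (simp add: field_simps power2_eq_square)
qed

lemma conj_loss_snoc:
  assumes h: "set h \<subseteq> {..<n}" and fin: "dual_finite h" and i: "i < n" and s: "0 \<le> s" "s \<le> 1"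
  defines "\<delta> \<equiv> \<alpha> (h @ [i]) i - \<alpha> h i"
  shows "conj (\<phi> i) (- \<alpha> (h @ [i]) i) \<le> ereal (conj_loss h i - w h \<bullet> (X i *v \<delta>)
      - (ND' (X i *v \<delta>))\<^sup>2 / (2 * (lam * real n)) - s * coord_gap h i
      - (\<gamma> * s * (1 - s) / 2 - s\<^sup>2 * (op_norm ND ND' (X i))\<^sup>2 / (2 * (lam * real n)))
        * (ND (u h i - \<alpha> h i))\<^sup>2)"
proof -
  have "- (\<alpha> h i + \<delta>) = - \<alpha> (h @ [i]) i" unfolding \<delta>_def by simp
  moreover have "0 < lam * real n" using lam_pos n_gt_0 by simp
  ultimately show ?thesis
    using conj_coordinate_ascent[OF is_norm_dual_norm[OF normP] is_norm_dual_norm[OF normP'] _ s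
        phis_strong[OF i] conj_loss_eq[OF fin i] u_sub[OF h i], of "lam * real n" \<delta>]
      alpha_argmax[OF h i] unfolding coord_gap_def \<delta>_def by (simp add: mult.assoc)
qed

lemma dual_finite_snoc:
  assumes h: "set h \<subseteq> {..<n}" and fin: "dual_finite h" and i: "i < n"
  shows "dual_finite (h @ [i])"
  unfolding dual_finite_def
proof (intro allI impI)
  fix j assume "j < n"
  show "conj (\<phi> j) (- \<alpha> (h @ [i]) j) \<noteq> \<infinity>"
  proof (cases "j = i")
    case True
    then show ?thesis using conj_loss_snoc[OF h fin i, of 0] by auto
  next
    case False
    then show ?thesis using fin \<open>j < n\<close> alpha_other[OF h i False] unfolding dual_finite_def by simp
  qed
qed

lemma dual_value_snoc:
  assumes h: "set h \<subseteq> {..<n}" and fin: "dual_finite h" and i: "i < n" and s: "0 \<le> s" "s \<le> 1"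
  shows "(s / real n) * coord_gap h i - (s / real n)\<^sup>2 * (step_coef s i * (ND (u h i - \<alpha> h i))\<^sup>2) / (2 * lam)
    \<le> dual_value (h @ [i]) - dual_value h"
proof -
  define \<delta> where "\<delta> = \<alpha> (h @ [i]) i - \<alpha> h i"
  define Q where "Q = (ND (u h i - \<alpha> h i))\<^sup>2"
  define A where "A = \<gamma> * s * (1 - s) / 2 - s\<^sup>2 * (op_norm ND ND' (X i))\<^sup>2 / (2 * (lam * real n))"
  have "(\<Sum>j<n. - conj_loss (h @ [i]) j)
      = (\<Sum>j<n. - conj_loss h j + (if j = i then conj_loss h i - conj_loss (h @ [i]) i else 0))"
    by (rule sum.cong) (auto simp: conj_loss_def alpha_other[OF h i])
  then have sum_snoc: "(\<Sum>j<n. - conj_loss (h @ [i]) j)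
      = (\<Sum>j<n. - conj_loss h j) + (conj_loss h i - conj_loss (h @ [i]) i)"
    using i by (simp only: sum.distrib) simp
  define E where "E = w h \<bullet> (X i *v \<delta>) + (ND' (X i *v \<delta>))\<^sup>2 / (2 * (lam * real n))"
  have "conj_loss (h @ [i]) i \<le> conj_loss h i - E - s * coord_gap h i - A * Q"
    using conj_loss_snoc[OF h fin i s] conj_loss_eq[OF dual_finite_snoc[OF h fin i] i]
    unfolding A_def Q_def E_def \<delta>_def by simp
  then have "(E + s * coord_gap h i + A * Q) / real n \<le> (conj_loss h i - conj_loss (h @ [i]) i) / real n"
    using n_gt_0 by (simp add: divide_right_mono)
  moreover have "dual_value (h @ [i]) - dual_value h = (conj_loss h i - conj_loss (h @ [i]) i) / real n
      - lam * ((w (h @ [i]) \<bullet> v (h @ [i]) - g (w (h @ [i]))) - (w h \<bullet> v h - g (w h)))"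
    unfolding dual_value_def sum_snoc by (simp add: algebra_simps add_divide_distrib diff_divide_distrib)
  moreover have "(E + s * coord_gap h i + A * Q) / real n = E / real n + (s * coord_gap h i + A * Q) / real n"
    by (simp add: add_divide_distrib)
  ultimately have "(s * coord_gap h i + A * Q) / real n \<le> dual_value (h @ [i]) - dual_value h"
    using conj_g_snoc[OF h i] unfolding E_def \<delta>_def by linarith
  moreover have "(s * coord_gap h i + A * Q) / real n
      = (s / real n) * coord_gap h i - (s / real n)\<^sup>2 * (step_coef s i * Q) / (2 * lam)"
  proof (cases "s = 0")
    case False
    then show ?thesis
      unfolding A_def step_coef_def using lam_pos n_gt_0 by (simp add: field_simps power2_eq_square)
  qed (simp add: A_def)
  ultimately show ?thesis unfolding Q_def by simp
qed

lemma mean_dual_value_increase: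
  assumes h: "set h \<subseteq> {..<n}" and fin: "dual_finite h" and s: "0 \<le> s" "s \<le> 1"
  shows "(s / real n) * (primal n lam \<phi> g X (w h) - dual_value h)
      - (s / real n)\<^sup>2 / (2 * lam * real n) * (\<Sum>i<n. step_coef s i * (ND (u h i - \<alpha> h i))\<^sup>2)
    \<le> (\<Sum>i<n. dual_value (h @ [i]) - dual_value h) / real n" (is "?R \<le> ?T / real n")
proof -
  let ?Q = "\<lambda>i. (ND (u h i - \<alpha> h i))\<^sup>2"
  have "(\<Sum>i<n. (s / real n) * coord_gap h i - (s / real n)\<^sup>2 * (step_coef s i * ?Q i) / (2 * lam))
      \<le> (\<Sum>i<n. dual_value (h @ [i]) - dual_value h)"
    by (rule sum_mono) (rule dual_value_snoc[OF h fin _ s], simp)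
  moreover have "(\<Sum>i<n. (s / real n) * coord_gap h i - (s / real n)\<^sup>2 * (step_coef s i * ?Q i) / (2 * lam))
      = real n * ((s / real n) * (primal n lam \<phi> g X (w h) - dual_value h)
          - (s / real n)\<^sup>2 / (2 * lam * real n) * (\<Sum>i<n. step_coef s i * ?Q i))"
    using n_gt_0 lam_pos
    by (simp add: sum_subtractf sum_distrib_left[symmetric] sum_divide_distrib[symmetric] sum_coord_gap[OF h]
        field_simps)
  ultimately have "real n * ?R \<le> ?T" by simp
  then have "?R * real n \<le> ?T" by (simp only: mult.commute)
  then show ?thesis by (simp only: pos_le_divide_eq[OF n_gt_0])
qed

lemma expected_dual_value_increase:
  assumes fin: "\<forall>h\<in>hists n m. dual_finite h" and s: "0 \<le> s" "s \<le> 1"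
  shows "(s / real n) * expect n m (\<lambda>h. primal n lam \<phi> g X (w h) - dual_value h)
      - (s / real n)\<^sup>2 / (2 * lam * real n) * (\<Sum>i<n. step_coef s i * expect n m (\<lambda>h. (ND (u h i - \<alpha> h i))\<^sup>2))
    \<le> expect n (Suc m) (\<lambda>h. dual_value h - dual_value (butlast h))"
proof -
  have "expect n m (\<lambda>h. (s / real n) * (primal n lam \<phi> g X (w h) - dual_value h)
      - (s / real n)\<^sup>2 / (2 * lam * real n) * (\<Sum>i<n. step_coef s i * (ND (u h i - \<alpha> h i))\<^sup>2))
    \<le> expect n m (\<lambda>h. (\<Sum>i<n. dual_value (h @ [i]) - dual_value h) / real n)"
    by (rule expect_mono, rule mean_dual_value_increase) (use fin s in \<open>auto simp: hists_def\<close>)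
  then show ?thesis
    unfolding expect_linear expect_Suc[OF n_gt_0[unfolded of_nat_0_less_iff]] by simp
qed

theorem expected_dual_increase:
  assumes t: "t \<ge> 1" and s: "0 \<le> s" "s \<le> 1"
  shows "expect_e n t (\<lambda>h. dual n lam \<phi> g X (\<alpha> h) - dual n lam \<phi> g X (\<alpha> (butlast h)))
    \<ge> ereal (s / real n) * expect_e n (t - 1)
          (\<lambda>h. ereal (primal n lam \<phi> g X (w h)) - dual n lam \<phi> g X (\<alpha> h))
      - ereal ((s / real n)\<^sup>2 *
          ((1 / real n) * (\<Sum>i<n. ((op_norm ND ND' (X i))\<^sup>2 - \<gamma> * (1 - s) * lam * real n / s)
                 * expect n (t - 1) (\<lambda>h. (ND (u h i - \<alpha> h i))\<^sup>2)))
          / (2 * lam))"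
proof (cases "\<forall>h\<in>hists n (t - 1). dual_finite h")
  case False
  then obtain h where h: "h \<in> hists n (t - 1)" "\<not> dual_finite h" by blast
  have "h @ [0] \<in> hists n t" using h(1) t n_pos by (auto simp: hists_def)
  moreover have "dual n lam \<phi> g X (\<alpha> (h @ [0])) - dual n lam \<phi> g X (\<alpha> (butlast (h @ [0]))) = \<infinity>"
    using dual_eq_MInfty[OF h(2)] by simp
  ultimately have "expect_e n t (\<lambda>h. dual n lam \<phi> g X (\<alpha> h) - dual n lam \<phi> g X (\<alpha> (butlast h))) = \<infinity>"
    using n_pos by (intro expect_e_PInfty) auto
  then show ?thesis by simp
next
  case True
  define m where "m = t - 1"
  have t_eq: "t = Suc m" using t unfolding m_def by simp
  have hist_dual: "dual n lam \<phi> g X (\<alpha> h) = ereal (dual_value h)" if "h \<in> hists n m" for h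
    using that True dual_eq_ereal unfolding m_def hists_def by blast
  have "dual n lam \<phi> g X (\<alpha> h) - dual n lam \<phi> g X (\<alpha> (butlast h)) = ereal (dual_value h - dual_value (butlast h))"
    if h: "h \<in> hists n t" for h
  proof -
    obtain h0 i where h0: "h0 \<in> hists n m" "i < n" "h = h0 @ [i]"
      using h unfolding t_eq hists_Suc by force
    then have "set h0 \<subseteq> {..<n}" "dual_finite h0" using True unfolding m_def hists_def by auto
    then have "dual n lam \<phi> g X (\<alpha> h) = ereal (dual_value h)"
      using dual_eq_ereal dual_finite_snoc h0 unfolding hists_def by auto
    then show ?thesis using hist_dual[OF h0(1)] h0(3) by simp
  qed
  then have "expect_e n t (\<lambda>h. dual n lam \<phi> g X (\<alpha> h) - dual n lam \<phi> g X (\<alpha> (butlast h)))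
      = ereal (expect n (Suc m) (\<lambda>h. dual_value h - dual_value (butlast h)))"
    unfolding t_eq by (rule expect_e_ereal)
  moreover have "expect_e n m (\<lambda>h. ereal (primal n lam \<phi> g X (w h)) - dual n lam \<phi> g X (\<alpha> h))
      = ereal (expect n m (\<lambda>h. primal n lam \<phi> g X (w h) - dual_value h))"
    by (rule expect_e_ereal) (simp add: hist_dual)
  moreover have "(s / real n)\<^sup>2 * ((1 / real n) * S) / (2 * lam) = (s / real n)\<^sup>2 / (2 * lam * real n) * S"
    for S by simp
  ultimately show ?thesis
    using expected_dual_value_increase[OF True[folded m_def] s]
    unfolding m_def[symmetric] step_coef_def by (simp add: mult_ac)
qed

end

theorem lemma1:
  fixes n :: nat and lam \<gamma> s :: real and t :: nat
    and X :: "nat \<Rightarrow> real^'k^'d"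
    and \<phi> :: "nat \<Rightarrow> real^'k \<Rightarrow> real" and g :: "real^'d \<Rightarrow> real"
    and NP :: "real^'k \<Rightarrow> real" and NP' :: "real^'d \<Rightarrow> real"
    and grad_gs :: "real^'d \<Rightarrow> real^'d"
    and \<alpha> :: "nat list \<Rightarrow> nat \<Rightarrow> real^'k"
    and v :: "nat list \<Rightarrow> real^'d"
    and u :: "nat list \<Rightarrow> nat \<Rightarrow> real^'k"
  defines "ND \<equiv> dual_norm NP" and "ND' \<equiv> dual_norm NP'"
    and "w \<equiv> (\<lambda>h. grad_gs (v h))"
  assumes n_pos: "n \<ge> 1" and lam_pos: "lam > 0" and gam: "\<gamma> \<ge> 0"
    and normP: "is_norm NP" and normP': "is_norm NP'"
    and phi_convex: "\<And>i. i < n \<Longrightarrow> convex_on UNIV (\<phi> i)"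
    and g_convex: "convex_on UNIV g"
    and g_strong: "strongly_convex_wrt NP' 1 (\<lambda>x. ereal (g x))"
    and gs_finite: "\<And>y. conj g y \<noteq> \<infinity>"
    and gs_deriv: "\<And>y. ((\<lambda>z. real_of_ereal (conj g z)) has_derivative (\<lambda>h. grad_gs y \<bullet> h)) (at y)"
    and gs_cont: "continuous_on UNIV grad_gs"
    and phis_strong: "\<And>i. i < n \<Longrightarrow> strongly_convex_wrt ND \<gamma> (conj (\<phi> i))"
    \<comment> \<open>Prox-SDCA, Option I; the state after the history h of random indices\<close>
    and alpha0: "\<And>j. \<alpha> [] j = 0"
    and v0: "v [] = 0"
    and alpha_other: "\<And>h i j. set h \<subseteq> {..<n} \<Longrightarrow> i < n \<Longrightarrow> j \<noteq> i \<Longrightarrow>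
                        \<alpha> (h @ [i]) j = \<alpha> h j"
    and alpha_argmax: "\<And>h i \<Delta>. set h \<subseteq> {..<n} \<Longrightarrow> i < n \<Longrightarrow>
        - conj (\<phi> i) (- (\<alpha> h i + \<Delta>)) - ereal (w h \<bullet> (X i *v \<Delta>))
            - ereal (1 / (2 * lam * real n) * (ND' (X i *v \<Delta>))\<^sup>2)
        \<le> - conj (\<phi> i) (- (\<alpha> h i + (\<alpha> (h @ [i]) i - \<alpha> h i)))
            - ereal (w h \<bullet> (X i *v (\<alpha> (h @ [i]) i - \<alpha> h i)))
            - ereal (1 / (2 * lam * real n) * (ND' (X i *v (\<alpha> (h @ [i]) i - \<alpha> h i)))\<^sup>2)"
    and v_step: "\<And>h i. set h \<subseteq> {..<n} \<Longrightarrow> i < n \<Longrightarrow>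
        v (h @ [i]) = v h + (1 / (lam * real n)) *\<^sub>R (X i *v (\<alpha> (h @ [i]) i - \<alpha> h i))"
    and u_sub: "\<And>h i. set h \<subseteq> {..<n} \<Longrightarrow> i < n \<Longrightarrow>
        - u h i \<in> subdiff (\<phi> i) (transpose (X i) *v w h)"
    and t_pos: "t \<ge> 1" and s_range: "0 \<le> s" "s \<le> 1"
  shows "expect_e n t (\<lambda>h. dual n lam \<phi> g X (\<alpha> h) - dual n lam \<phi> g X (\<alpha> (butlast h)))
    \<ge> ereal (s / real n) * expect_e n (t - 1)
          (\<lambda>h. ereal (primal n lam \<phi> g X (w h)) - dual n lam \<phi> g X (\<alpha> h))
      - ereal ((s / real n)\<^sup>2 *
          ((1 / real n) * (\<Sum>i<n. ((op_norm ND ND' (X i))\<^sup>2 - \<gamma> * (1 - s) * lam * real n / s)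
                 * expect n (t - 1) (\<lambda>h. (ND (u h i - \<alpha> h i))\<^sup>2)))
          / (2 * lam))"
proof -
  interpret prox_sdca n lam \<gamma> X \<phi> g NP NP' grad_gs \<alpha> v u
    by unfold_locales (use assms in \<open>simp_all add: ND_def ND'_def w_def\<close>)
  show ?thesis
    unfolding ND_def ND'_def w_def by (rule expected_dual_increase[OF t_pos s_range])
qed

end
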